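(* Let $\gamma\in(1,2]$, $a>0$ and $u\in\mathbb R^3$, and let $$g(\lambda)=\lambda^3-\frac1{4\gamma}\big(4a^4+4a^2+\gamma(|u|^2+2)^2\big)\lambda^2+\frac{a^2}{4\gamma^2}\Big(4a^4-4a^2+\gamma\big[4(|u|^2+1)a^2+(|u|^2+2)^2\big]\Big)\lambda-\frac{a^6(\gamma-1)}{\gamma^3}.$$ Assume $g$ has three positive real roots $0<\lambda_1<\lambda_2<\lambda_3$. Then $$\lambda_1\ge\frac{a^2(\gamma-1)}{\gamma}\min\Big(\frac{a^2}{\gamma(|u|^2+2)^2},\ \frac1{4(a^2+1)},\ \frac1{4\gamma(|u|^2+1)}\Big).$$ *)

theory Defs
  imports "HOL-Analysis.Analysis"
begin

definition gB2 :: "real \<Rightarrow> real \<Rightarrow> real^3 \<Rightarrow> real \<Rightarrow> real" where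
  "gB2 \<gamma> a u x =
     x^3
     - (1 / (4 * \<gamma>)) * (4 * a^4 + 4 * a^2 + \<gamma> * (norm u ^ 2 + 2)^2) * x^2
     + (a^2 / (4 * \<gamma>^2)) * (4 * a^4 - 4 * a^2
          + \<gamma> * (4 * (norm u ^ 2 + 1) * a^2 + (norm u ^ 2 + 2)^2)) * x
     - a^6 * (\<gamma> - 1) / \<gamma>^3"

end

theory Submission
  imports Defs
begin

text \<open>By Vieta, the constant coefficient of the cubic is \<open>\<lambda>\<^sub>1\<lambda>\<^sub>2\<lambda>\<^sub>3\<close> and
  the linear one is \<open>\<lambda>\<^sub>1\<lambda>\<^sub>2 + \<lambda>\<^sub>1\<lambda>\<^sub>3 + \<lambda>\<^sub>2\<lambda>\<^sub>3\<close>; their difference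
  \<open>\<lambda>\<^sub>1 c\<^sub>1 - c\<^sub>0 = \<lambda>\<^sub>1\<^sup>2(\<lambda>\<^sub>2 + \<lambda>\<^sub>3)\<close> is nonnegative, so every positive root is at least
  \<open>c\<^sub>0 / c\<^sub>1\<close>. The minimum in the bound is chosen so that each of the three summands of \<open>c\<^sub>1\<close>
  contributes at most \<open>a\<^sup>2\<close> after multiplication by it, which bounds \<open>c\<^sub>1\<close> from above.\<close>

lemma cubic_roots_vieta:
  fixes B C D x y z :: "'a::idom"
  assumes "x \<noteq> y" "x \<noteq> z" "y \<noteq> z"
    and "x^3 - B*x^2 + C*x - D = 0" "y^3 - B*y^2 + C*y - D = 0" "z^3 - B*z^2 + C*z - D = 0"
  shows "B = x + y + z" "C = x*y + x*z + y*z" "D = x*y*z"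
proof -
  have "(y - x) * (x^2 + x*y + y^2 - B*(x+y) + C) = 0"
    using assms(4,5) by (simp add: algebra_simps power2_eq_square power3_eq_cube)
  then have xy: "x^2 + x*y + y^2 - B*(x+y) + C = 0" using assms(1) by simp
  have "(z - x) * (x^2 + x*z + z^2 - B*(x+z) + C) = 0"
    using assms(4,6) by (simp add: algebra_simps power2_eq_square power3_eq_cube)
  then have xz: "x^2 + x*z + z^2 - B*(x+z) + C = 0" using assms(2) by simp
  have "(z - y) * (x + y + z - B)
      = (x^2 + x*z + z^2 - B*(x+z) + C) - (x^2 + x*y + y^2 - B*(x+y) + C)"
    by (simp add: algebra_simps power2_eq_square)
  then have "(z - y) * (x + y + z - B) = 0" using xy xz by simp
  then show B: "B = x + y + z" using assms(3) by simp
  show C: "C = x*y + x*z + y*z" using xy B by (simp add: algebra_simps power2_eq_square)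
  show "D = x*y*z" using assms(4) B C by (simp add: algebra_simps power2_eq_square power3_eq_cube)
qed

lemma cubic_positive_root_ge:
  fixes B C D x y z :: "'a::linordered_field"
  assumes "0 < x" "0 < y" "0 < z" "x \<noteq> y" "x \<noteq> z" "y \<noteq> z"
    and "x^3 - B*x^2 + C*x - D = 0" "y^3 - B*y^2 + C*y - D = 0" "z^3 - B*z^2 + C*z - D = 0"
  shows "0 < C" "D / C \<le> x"
proof -
  have C: "C = x*y + x*z + y*z" and D: "D = x*y*z"
    using cubic_roots_vieta[OF assms(4-9)] by simp_all
  show "0 < C" unfolding C using assms(1-3) by (simp add: add_pos_pos)
  moreover have "D \<le> x * C"
  proof -
    have "x * C - D = x * x * (y + z)" unfolding C D by (simp add: algebra_simps)
    moreover have "0 \<le> x * x * (y + z)" using assms(1-3) by simp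
    ultimately show ?thesis by simp
  qed
  ultimately show "D / C \<le> x" by (simp add: divide_le_eq mult.commute)
qed

definition gB2_coeff2 :: "real \<Rightarrow> real \<Rightarrow> real^3 \<Rightarrow> real" where
  "gB2_coeff2 \<gamma> a u = (1 / (4 * \<gamma>)) * (4 * a^4 + 4 * a^2 + \<gamma> * (norm u ^ 2 + 2)^2)"

definition gB2_coeff1 :: "real \<Rightarrow> real \<Rightarrow> real^3 \<Rightarrow> real" where
  "gB2_coeff1 \<gamma> a u = (a^2 / (4 * \<gamma>^2)) * (4 * a^4 - 4 * a^2
     + \<gamma> * (4 * (norm u ^ 2 + 1) * a^2 + (norm u ^ 2 + 2)^2))"

definition gB2_coeff0 :: "real \<Rightarrow> real \<Rightarrow> real^3 \<Rightarrow> real" where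
  "gB2_coeff0 \<gamma> a u = a^6 * (\<gamma> - 1) / \<gamma>^3"

lemma gB2_eq_coeffs:
  "gB2 \<gamma> a u x = x^3 - gB2_coeff2 \<gamma> a u * x^2 + gB2_coeff1 \<gamma> a u * x - gB2_coeff0 \<gamma> a u"
  unfolding gB2_def gB2_coeff2_def gB2_coeff1_def gB2_coeff0_def by simp

lemma coeff1_factor_mult_le:
  fixes \<gamma> A s m :: real
  assumes "0 \<le> A" "0 \<le> m"
    and "\<gamma> * (s + 2)^2 * m \<le> A" "4 * (A + 1) * m \<le> 1" "4 * \<gamma> * (s + 1) * m \<le> 1"
  shows "(4 * A^2 - 4 * A + \<gamma> * (4 * (s + 1) * A + (s + 2)^2)) * m \<le> 4 * A"
proof -
  have "(4 * A^2 - 4 * A + \<gamma> * (4 * (s + 1) * A + (s + 2)^2)) * m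
      = A * (4 * (A + 1) * m) + A * (4 * \<gamma> * (s + 1) * m) + \<gamma> * (s + 2)^2 * m - 8 * A * m"
    by (simp add: algebra_simps power2_eq_square)
  also have "\<dots> \<le> A * 1 + A * 1 + A - 8 * A * m"
    using assms by (intro diff_right_mono add_mono mult_left_mono) auto
  also have "\<dots> \<le> 4 * A" using assms(1) mult_nonneg_nonneg[OF assms(1,2)] by linarith
  finally show ?thesis .
qed

lemma gB2_coeff1_times_bound_le:
  fixes \<gamma> a :: real and u :: "real^3"
  assumes "1 < \<gamma>" "0 < a"
  defines "m \<equiv> Min {a^2 / (\<gamma> * (norm u ^ 2 + 2)^2), 1 / (4 * (a^2 + 1)), 1 / (4 * \<gamma> * (norm u ^ 2 + 1))}"
  shows "gB2_coeff1 \<gamma> a u * (a^2 * (\<gamma> - 1) / \<gamma> * m) \<le> gB2_coeff0 \<gamma> a u"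
proof -
  define A where "A = a^2"
  define s where "s = norm u ^ 2"
  define E where "E = 4 * A^2 - 4 * A + \<gamma> * (4 * (s + 1) * A + (s + 2)^2)"
  have "0 < \<gamma>" "0 < A" "0 \<le> s" using assms(1,2) by (simp_all add: A_def s_def)
  then have P1: "0 < \<gamma> * (s + 2)^2" and P2: "0 < 4 * (A + 1)" and P3: "0 < 4 * \<gamma> * (s + 1)"
    by simp_all
  have "m \<le> A / (\<gamma> * (s + 2)^2)" "m \<le> 1 / (4 * (A + 1))" "m \<le> 1 / (4 * \<gamma> * (s + 1))"
    unfolding m_def A_def s_def by auto
  then have "\<gamma> * (s + 2)^2 * m \<le> A" "4 * (A + 1) * m \<le> 1" "4 * \<gamma> * (s + 1) * m \<le> 1"
    using P1 P2 P3 by (simp_all add: pos_le_divide_eq mult.commute)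
  moreover have "0 \<le> m"
    using P1 P2 P3 \<open>0 < A\<close> unfolding m_def A_def s_def by (simp add: less_imp_le)
  ultimately have "E * m \<le> 4 * A"
    unfolding E_def using \<open>0 < A\<close> by (intro coeff1_factor_mult_le) simp_all
  have "gB2_coeff1 \<gamma> a u * (a^2 * (\<gamma> - 1) / \<gamma> * m) = A^2 * (\<gamma> - 1) / (4 * \<gamma>^3) * (E * m)"
    unfolding gB2_coeff1_def E_def A_def s_def using \<open>0 < \<gamma>\<close>
    by (simp add: field_simps power2_eq_square power3_eq_cube power4_eq_xxxx)
  also have "\<dots> \<le> A^2 * (\<gamma> - 1) / (4 * \<gamma>^3) * (4 * A)"
    using \<open>E * m \<le> 4 * A\<close> \<open>0 < \<gamma>\<close> assms(1) by (intro mult_left_mono) auto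
  also have "\<dots> = gB2_coeff0 \<gamma> a u"
    unfolding gB2_coeff0_def A_def using \<open>0 < \<gamma>\<close>
    by (simp add: field_simps power2_eq_square power3_eq_cube eval_nat_numeral)
  finally show ?thesis .
qed

theorem lemmaB2:
  fixes \<gamma> a l1 l2 l3 :: real and u :: "real^3"
  assumes "1 < \<gamma>" "\<gamma> \<le> 2" "0 < a"
    and "0 < l1" "l1 < l2" "l2 < l3"
    and "gB2 \<gamma> a u l1 = 0" "gB2 \<gamma> a u l2 = 0" "gB2 \<gamma> a u l3 = 0"
  shows "l1 \<ge> a^2 * (\<gamma> - 1) / \<gamma> *
           Min {a^2 / (\<gamma> * (norm u ^ 2 + 2)^2), 1 / (4 * (a^2 + 1)), 1 / (4 * \<gamma> * (norm u ^ 2 + 1))}"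
  (is "_ \<ge> ?bound")
proof -
  have c1_pos: "0 < gB2_coeff1 \<gamma> a u" and "gB2_coeff0 \<gamma> a u / gB2_coeff1 \<gamma> a u \<le> l1"
    using cubic_positive_root_ge[of l1 l2 l3 "gB2_coeff2 \<gamma> a u" "gB2_coeff1 \<gamma> a u"]
      assms(4-9) by (simp_all add: gB2_eq_coeffs)
  moreover have "?bound \<le> gB2_coeff0 \<gamma> a u / gB2_coeff1 \<gamma> a u"
    unfolding pos_le_divide_eq[OF c1_pos]
    using gB2_coeff1_times_bound_le[OF assms(1,3), of u] by (simp only: mult.commute)
  ultimately show ?thesis by linarith
qed

end
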